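(* Let $g$ be a connected graph and $S$ a minimal separator of $g$ that is a clique of $g$. Let $c_1,\dots,c_k$ be the connected components of $g\setminus S$ and $\mathcal{C}(S)=\{g_{|V(c_i)\cup N_g(V(c_i))}: 1\le i\le k\}$. For any two distinct graphs $d_1,d_2\in\mathcal{C}(S)$, the sets of minimal separators of $d_1$ and of $d_2$ are disjoint.
   Context: Graphs are finite, simple and undirected. $g_{|U}$ is the subgraph induced by $U$, $g\setminus S=g_{|V(g)\setminus S}$, and $N_g(U)=\bigcup_{v\in U}N_g(v)\setminus U$. For nodes $u,v$, a set $S\subseteq V(g)$ is a $(u,v)$-separator if $u,v$ lie in distinct connected components of $g\setminus S$; it is a minimal $(u,v)$-separator if no proper subset is one; $S$ is a minimal separator if it is a minimal $(u,v)$-separator for some $u,v$. *)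

theory Defs
  imports Main
begin

text \<open>Induced subgraphs restrict the adjacency relation to the new vertex set, so that
graphs are represented canonically.\<close>

type_synonym 'a graph = "'a set \<times> ('a \<Rightarrow> 'a \<Rightarrow> bool)"

definition verts :: "'a graph \<Rightarrow> 'a set" where "verts g = fst g"
definition adj :: "'a graph \<Rightarrow> 'a \<Rightarrow> 'a \<Rightarrow> bool" where "adj g = snd g"

definition simple_graph :: "'a graph \<Rightarrow> bool" where
  "simple_graph g \<longleftrightarrow> finite (verts g)
     \<and> (\<forall>x y. adj g x y \<longrightarrow> x \<in> verts g \<and> y \<in> verts g)
     \<and> (\<forall>x y. adj g x y \<longrightarrow> adj g y x)
     \<and> (\<forall>x. \<not> adj g x x)"

definition induced :: "'a graph \<Rightarrow> 'a set \<Rightarrow> 'a graph" where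
  "induced g U = (U, \<lambda>x y. x \<in> U \<and> y \<in> U \<and> adj g x y)"

definition remove :: "'a graph \<Rightarrow> 'a set \<Rightarrow> 'a graph" where
  "remove g S = induced g (verts g - S)"

definition nbhd :: "'a graph \<Rightarrow> 'a set \<Rightarrow> 'a set" where
  "nbhd g U = {w. \<exists>v\<in>U. adj g v w} - U"

definition reach :: "'a graph \<Rightarrow> 'a \<Rightarrow> 'a \<Rightarrow> bool" where
  "reach g u v \<longleftrightarrow> u \<in> verts g \<and> v \<in> verts g \<and>
     (\<lambda>x y. x \<in> verts g \<and> y \<in> verts g \<and> adj g x y)\<^sup>*\<^sup>* u v"

definition connected_graph :: "'a graph \<Rightarrow> bool" where
  "connected_graph g \<longleftrightarrow> (\<forall>u\<in>verts g. \<forall>v\<in>verts g. reach g u v)"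

definition components :: "'a graph \<Rightarrow> 'a set set" where
  "components g = {{v. reach g u v} | u. u \<in> verts g}"

definition is_clique :: "'a graph \<Rightarrow> 'a set \<Rightarrow> bool" where
  "is_clique g S \<longleftrightarrow> S \<subseteq> verts g \<and> (\<forall>x\<in>S. \<forall>y\<in>S. x \<noteq> y \<longrightarrow> adj g x y)"

definition separator :: "'a graph \<Rightarrow> 'a set \<Rightarrow> 'a \<Rightarrow> 'a \<Rightarrow> bool" where
  "separator g S u v \<longleftrightarrow> S \<subseteq> verts g \<and> u \<in> verts g - S \<and> v \<in> verts g - S
     \<and> \<not> reach (remove g S) u v"

definition min_separator :: "'a graph \<Rightarrow> 'a set \<Rightarrow> 'a \<Rightarrow> 'a \<Rightarrow> bool" where
  "min_separator g S u v \<longleftrightarrow> separator g S u v \<and> (\<forall>T. T \<subset> S \<longrightarrow> \<not> separator g T u v)"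

definition min_separators :: "'a graph \<Rightarrow> 'a set set" where
  "min_separators g = {S. \<exists>u v. min_separator g S u v}"

definition comp_graphs :: "'a graph \<Rightarrow> 'a set \<Rightarrow> 'a graph set" where
  "comp_graphs g S = {induced g (C \<union> nbhd g C) | C. C \<in> components (remove g S)}"

end

theory Submission
  imports Defs
begin

text \<open>Let \<open>d\<^sub>i = g|(C\<^sub>i \<union> N(C\<^sub>i))\<close> for distinct components \<open>C\<^sub>1, C\<^sub>2\<close> of \<open>g \<setminus> S\<close>.
Every separator of \<open>d\<^sub>1\<close> meets \<open>C\<^sub>1\<close>: if \<open>T\<close> avoids \<open>C\<^sub>1\<close>, then \<open>d\<^sub>1 \<setminus> T\<close> still contains
the connected set \<open>C\<^sub>1\<close>, and each remaining vertex of \<open>N(C\<^sub>1)\<close> is adjacent to it, so \<open>d\<^sub>1 \<setminus> T\<close>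
is connected. On the other hand every separator of \<open>d\<^sub>2\<close> lies in \<open>C\<^sub>2 \<union> N(C\<^sub>2) \<subseteq> C\<^sub>2 \<union> S\<close>,
which is disjoint from \<open>C\<^sub>1\<close>.\<close>

lemma verts_induced [simp]: "verts (induced g U) = U"
  by (simp add: induced_def verts_def)

lemma adj_induced [simp]: "adj (induced g U) x y \<longleftrightarrow> x \<in> U \<and> y \<in> U \<and> adj g x y"
  by (simp add: induced_def adj_def)

lemma verts_remove [simp]: "verts (remove g S) = verts g - S"
  by (simp add: remove_def)

lemma adj_remove [simp]:
  "adj (remove g S) x y \<longleftrightarrow> x \<in> verts g - S \<and> y \<in> verts g - S \<and> adj g x y"
  by (simp add: remove_def)

lemma simple_graph_sym: "simple_graph g \<Longrightarrow> adj g x y \<Longrightarrow> adj g y x"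
  by (simp add: simple_graph_def)

lemma simple_graph_adj_verts: "simple_graph g \<Longrightarrow> adj g x y \<Longrightarrow> y \<in> verts g"
  by (simp add: simple_graph_def)

lemma reach_verts: "reach g u v \<Longrightarrow> u \<in> verts g \<and> v \<in> verts g"
  by (simp add: reach_def)

lemma reach_refl: "u \<in> verts g \<Longrightarrow> reach g u u"
  by (simp add: reach_def)

lemma reach_trans: "reach g u v \<Longrightarrow> reach g v w \<Longrightarrow> reach g u w"
  unfolding reach_def by auto

lemma reach_step: "reach g u v \<Longrightarrow> w \<in> verts g \<Longrightarrow> adj g v w \<Longrightarrow> reach g u w"
  unfolding reach_def by (auto intro: rtranclp.rtrancl_into_rtrancl)

lemma reach_sym:
  assumes sym: "\<And>x y. adj g x y \<Longrightarrow> adj g y x" and "reach g u v"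
  shows "reach g v u"
proof -
  let ?E = "\<lambda>x y. x \<in> verts g \<and> y \<in> verts g \<and> adj g x y"
  have "?E\<^sup>*\<^sup>* u v" using \<open>reach g u v\<close> by (simp add: reach_def)
  then have "?E\<^sup>*\<^sup>* v u"
    by induction (auto intro: converse_rtranclp_into_rtranclp sym)
  with \<open>reach g u v\<close> show ?thesis by (simp add: reach_def)
qed

lemma reach_transfer:
  assumes "reach g u v"
    and verts: "\<And>x. reach g u x \<Longrightarrow> x \<in> verts h"
    and adj: "\<And>x y. reach g u x \<Longrightarrow> reach g u y \<Longrightarrow> adj g x y \<Longrightarrow> adj h x y"
  shows "reach h u v"
proof -
  let ?E = "\<lambda>g x y. x \<in> verts g \<and> y \<in> verts g \<and> adj g x y"
  have u: "reach g u u" using \<open>reach g u v\<close> by (simp add: reach_verts reach_refl)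
  have "(?E g)\<^sup>*\<^sup>* u v" using \<open>reach g u v\<close> by (simp add: reach_def)
  then have "(?E h)\<^sup>*\<^sup>* u v"
  proof induction
    case (step y z)
    then have "reach g u y" "reach g u z"
      using u by (auto simp: reach_def intro: rtranclp.rtrancl_into_rtrancl)
    with step show ?case by (auto intro: rtranclp.rtrancl_into_rtrancl verts adj)
  qed simp
  with \<open>reach g u v\<close> u verts show ?thesis by (simp add: reach_def)
qed

lemma connected_graphI:
  assumes sym: "\<And>x y. adj g x y \<Longrightarrow> adj g y x"
    and "\<And>x. x \<in> verts g \<Longrightarrow> reach g u x"
  shows "connected_graph g"
  unfolding connected_graph_def using assms reach_sym reach_trans by metis

lemma separator_not_connected_remove: "separator g T a b \<Longrightarrow> \<not> connected_graph (remove g T)"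
  by (auto simp: separator_def connected_graph_def)

lemma min_separators_subset_verts: "T \<in> min_separators g \<Longrightarrow> T \<subseteq> verts g"
  by (auto simp: min_separators_def min_separator_def separator_def)

lemma components_subset_verts: "C \<in> components g \<Longrightarrow> C \<subseteq> verts g"
  by (auto simp: components_def dest: reach_verts)

lemma components_eq:
  assumes sym: "\<And>x y. adj g x y \<Longrightarrow> adj g y x"
    and "C\<^sub>1 \<in> components g" "C\<^sub>2 \<in> components g" "x \<in> C\<^sub>1" "x \<in> C\<^sub>2"
  shows "C\<^sub>1 = C\<^sub>2"
proof -
  obtain u\<^sub>1 u\<^sub>2 where C: "C\<^sub>1 = {v. reach g u\<^sub>1 v}" "C\<^sub>2 = {v. reach g u\<^sub>2 v}"
    using assms(2,3) by (auto simp: components_def)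
  with assms(4,5) have "reach g u\<^sub>1 u\<^sub>2" "reach g u\<^sub>2 u\<^sub>1"
    by (auto intro: reach_trans reach_sym[OF sym])
  then show ?thesis unfolding C by (auto intro: reach_trans)
qed

lemma nbhd_component_remove_subset:
  assumes g: "simple_graph g" and C: "C \<in> components (remove g S)"
  shows "nbhd g C \<subseteq> S"
proof
  fix w assume "w \<in> nbhd g C"
  then obtain v where v: "v \<in> C" "adj g v w" "w \<notin> C" by (auto simp: nbhd_def)
  obtain u where u: "C = {x. reach (remove g S) u x}"
    using C by (auto simp: components_def)
  show "w \<in> S"
  proof (rule ccontr)
    assume "w \<notin> S"
    have "reach (remove g S) u v" using u v(1) by simp
    moreover have "w \<in> verts (remove g S)" using \<open>w \<notin> S\<close> simple_graph_adj_verts[OF g v(2)] by simp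
    ultimately have "reach (remove g S) u w"
      using v(2) reach_verts by (metis adj_remove reach_step verts_remove)
    with u v(3) show False by simp
  qed
qed

lemma connected_remove_component_closure:
  assumes g: "simple_graph g" and C: "C \<in> components (remove g S)" and T: "T \<inter> C = {}"
  shows "connected_graph (remove (induced g (C \<union> nbhd g C)) T)"
    (is "connected_graph ?h")
proof -
  obtain u where C_def: "C = {x. reach (remove g S) u x}"
    using C by (auto simp: components_def)
  have C_verts: "C \<subseteq> verts ?h" using T by auto
  have reach_C: "reach ?h u x" if "x \<in> C" for x
  proof (rule reach_transfer)
    show "reach (remove g S) u x" using that by (simp add: C_def)
  qed (use C_verts C_def in auto)
  show ?thesis
  proof (rule connected_graphI)
    show "adj ?h x y \<Longrightarrow> adj ?h y x" for x y by (auto intro: simple_graph_sym[OF g])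
  next
    fix x assume x: "x \<in> verts ?h"
    show "reach ?h u x"
    proof (cases "x \<in> C")
      case False
      with x obtain v where v: "v \<in> C" "adj g v x" by (auto simp: nbhd_def)
      moreover have "adj ?h v x" using v x C_verts by auto
      ultimately show ?thesis using x reach_step[OF reach_C] by blast
    qed (rule reach_C)
  qed
qed

lemma min_separators_component_closure_meet:
  assumes "simple_graph g" "C \<in> components (remove g S)"
    and "T \<in> min_separators (induced g (C \<union> nbhd g C))"
  shows "T \<inter> C \<noteq> {}"
proof
  assume "T \<inter> C = {}"
  obtain a b where "separator (induced g (C \<union> nbhd g C)) T a b"
    using assms(3) by (auto simp: min_separators_def min_separator_def)
  with connected_remove_component_closure[OF assms(1,2) \<open>T \<inter> C = {}\<close>] show False
    by (auto dest: separator_not_connected_remove)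
qed

theorem lemma7:
  fixes g :: "'a graph" and S :: "'a set" and d1 d2 :: "'a graph"
  assumes "simple_graph g"
    and "connected_graph g"
    and "S \<in> min_separators g"
    and "is_clique g S"
    and "d1 \<in> comp_graphs g S" and "d2 \<in> comp_graphs g S"
    and "d1 \<noteq> d2"
  shows "min_separators d1 \<inter> min_separators d2 = {}"
proof (rule ccontr)
  assume "min_separators d1 \<inter> min_separators d2 \<noteq> {}"
  then obtain T where T: "T \<in> min_separators d1" "T \<in> min_separators d2" by blast
  obtain C\<^sub>1 C\<^sub>2 where C: "C\<^sub>1 \<in> components (remove g S)" "C\<^sub>2 \<in> components (remove g S)"
    and d: "d1 = induced g (C\<^sub>1 \<union> nbhd g C\<^sub>1)" "d2 = induced g (C\<^sub>2 \<union> nbhd g C\<^sub>2)"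
    using assms(5,6) by (auto simp: comp_graphs_def)
  obtain x where x: "x \<in> T" "x \<in> C\<^sub>1"
    using min_separators_component_closure_meet[OF assms(1) C(1)] T(1) d(1) by blast
  have "x \<notin> S" using x(2) components_subset_verts[OF C(1)] by auto
  moreover have "T \<subseteq> C\<^sub>2 \<union> nbhd g C\<^sub>2" using min_separators_subset_verts[OF T(2)] d(2) by simp
  ultimately have "x \<in> C\<^sub>2" using x(1) nbhd_component_remove_subset[OF assms(1) C(2)] by blast
  then have "C\<^sub>1 = C\<^sub>2"
    using components_eq[OF _ C x(2)] simple_graph_sym[OF assms(1)] by auto
  with d assms(7) show False by simp
qed

end
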